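(* Let $\alpha,\beta,d>0$, $\mathbf{c}=(c_j)_{j\in\mathbb{Z}}\in L^\infty(\mathbb{R}_+,\ell^\infty(\mathbb{Z}))$, and let $\zeta,\xi:\mathbb{R}_+\to\mathbb{R}$ be continuous. Let $(\mathbf{v},\boldsymbol{\rho})=(v_j,\rho_j)_{j\in\mathbb{Z}}$ with, for every $j$, $\rho_j\in\mathscr{C}^1([0,+\infty))$, $v_j\in\mathscr{C}^0([0,+\infty)\times[0,1])$, $\partial_tv_j,\partial_x^2v_j\in\mathscr{C}^0((0,+\infty)\times(0,1))$, $\partial_xv_j\in\mathscr{C}^0((0,+\infty)\times[0,1])$, satisfy for all $t>0$ and all integers $j$ with $\zeta(t)\le j\le\xi(t)$: $$\partial_tv_j-d\,\partial_x^2v_j\ge0\ \text{on }(0,1),\qquad \rho_j'(t)-c_j(t)\rho_j(t)\ge\alpha[v_j(t,0)+v_{j-1}(t,1)],$$ $$-d\,\partial_xv_j(t,0)+\alpha v_j(t,0)\ge\beta\rho_j(t),\qquad d\,\partial_xv_j(t,1)+\alpha v_j(t,1)\ge\beta\rho_{j+1}(t).$$ Assume $v_j(0,x)\ge0$ and $\rho_j(0)\ge0$ for all $x\in[0,1]$ and integers $\zeta(0)-1\le j\le\xi(0)+1$, and $v_j(t,x)\ge0$, $\rho_j(t)\ge0$ for all $t>0$, $x\in[0,1]$ and integers $j\in[\zeta(t)-1,\zeta(t))\cup(\xi(t),\xi(t)+1]$. Then $v_j(t,x)\ge0$ and $\rho_j(t)\ge0$ for all $t>0$, $x\in[0,1]$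 and integers $\zeta(t)\le j\le\xi(t)$. *)

theory Defs
  imports "HOL-Analysis.Analysis"
begin

end

theory Submission
  imports Defs
begin

(* A weak minimum principle. Let M bound c from above, \<kappa> = 2\<beta>/\<alpha> and \<gamma> > M + 2\<alpha>\<kappa>. The function
   exp(-\<gamma> t) min(v_j(t,x), \<kappa> \<rho>_j(t)) attains its minimum over the compact set of (j, t, x) with
   0 \<le> t \<le> T, 0 \<le> x \<le> 1 and \<zeta>(t) - 1 \<le> j \<le> \<xi>(t) + 1. By the initial and lateral data a negative
   minimum lies at some t > 0 with \<zeta>(t) \<le> j \<le> \<xi>(t), so it is also a minimum over earlier times.
   If it is attained by v_j, the heat inequality (x interior) or the boundary inequality (x = 0, 1)
   fails there; if it is attained by \<kappa> \<rho>_j, the differential inequality for \<rho>_j fails. *)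

lemma deriv_nonneg_at_right_min:
  fixes f :: "real \<Rightarrow> real"
  assumes "(f has_real_derivative D) (at a within {a..b})" "a < b"
    and "\<And>y. y \<in> {a<..b} \<Longrightarrow> f a \<le> f y"
  shows "0 \<le> D"
proof -
  have "((\<lambda>y. (f y - f a) / (y - a)) \<longlongrightarrow> D) (at_right a)"
    using assms(1,2) by (simp add: has_field_derivative_iff at_within_Icc_at_right)
  moreover have "eventually (\<lambda>y. 0 \<le> (f y - f a) / (y - a)) (at_right a)"
    unfolding eventually_at_right_field using assms(2,3) by (intro exI[of _ b]) auto
  ultimately show ?thesis
    by (rule tendsto_lowerbound) simp
qed

lemma deriv_nonpos_at_left_min:
  fixes f :: "real \<Rightarrow> real"
  assumes "(f has_real_derivative D) (at b within {a..b})" "a < b"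
    and "\<And>y. y \<in> {a..<b} \<Longrightarrow> f b \<le> f y"
  shows "D \<le> 0"
proof -
  have "((\<lambda>y. (f y - f b) / (y - b)) \<longlongrightarrow> D) (at_left b)"
    using assms(1,2) by (simp add: has_field_derivative_iff at_within_Icc_at_left)
  moreover have "eventually (\<lambda>y. (f y - f b) / (y - b) \<le> 0) (at_left b)"
    unfolding eventually_at_left_field using assms(2,3)
    by (intro exI[of _ a]) (auto simp: divide_nonneg_neg)
  ultimately show ?thesis
    by (rule tendsto_upperbound) simp
qed

lemma second_deriv_nonneg_at_min:
  fixes f f' :: "real \<Rightarrow> real"
  assumes x: "x \<in> {a<..<b}"
    and f': "\<And>y. y \<in> {a<..<b} \<Longrightarrow> (f has_real_derivative f' y) (at y)"
    and f'': "(f' has_real_derivative D) (at x)"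
    and min: "\<And>y. y \<in> {a<..<b} \<Longrightarrow> f x \<le> f y"
  shows "0 \<le> D"
proof (rule ccontr)
  assume "\<not> 0 \<le> D"
  then obtain e where "e > 0" and f'_neg: "\<And>h. 0 < h \<Longrightarrow> h < e \<Longrightarrow> f' (x + h) < f' x"
    using DERIV_neg_dec_right[OF f''] by force
  have "f' x = 0"
    using x min by (intro DERIV_local_min[OF f', of x "min (x - a) (b - x)"]) (auto simp: abs_if)
  define y where "y = x + min e (b - x) / 2"
  have y: "x < y" "y < b" "y < x + e"
    using x \<open>e > 0\<close> by (auto simp: y_def min_def field_simps)
  have "f y < f x"
  proof (rule DERIV_neg_imp_decreasing_open[OF \<open>x < y\<close>])
    show "\<exists>D'. (f has_real_derivative D') (at z) \<and> D' < 0" if "x < z" "z < y" for z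
      using f'[of z] f'_neg[of "z - x"] \<open>f' x = 0\<close> that x y by auto
    show "continuous_on {x..y} f"
      using x y by (intro continuous_at_imp_continuous_on ballI DERIV_isCont[OF f']) auto
  qed
  then show False
    using min[of y] x y by auto
qed

lemma weighted_deriv_le_at_left_min:
  fixes f :: "real \<Rightarrow> real"
  assumes "(f has_real_derivative D) (at t)" "a < t"
    and "\<And>s. s \<in> {a..<t} \<Longrightarrow> exp (- \<gamma> * t) * f t \<le> exp (- \<gamma> * s) * f s"
  shows "D \<le> \<gamma> * f t"
proof -
  have "((\<lambda>s. exp (- \<gamma> * s) * f s) has_real_derivative exp (- \<gamma> * t) * (D - \<gamma> * f t))
          (at t within {a..t})"
    using has_field_derivative_at_within[OF assms(1)]
    by (auto intro!: derivative_eq_intros simp: algebra_simps)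
  then have "exp (- \<gamma> * t) * (D - \<gamma> * f t) \<le> 0"
    using assms(2,3) by (rule deriv_nonpos_at_left_min)
  then show ?thesis
    by (simp add: mult_le_0_iff)
qed

lemma nonneg_if_AE_nonneg_nhds:
  fixes G :: "real \<Rightarrow> real"
  assumes "isCont G t" "eventually P (nhds t)" "AE s in lborel. P s \<longrightarrow> 0 \<le> G s"
  shows "0 \<le> G t"
proof (rule ccontr)
  assume "\<not> 0 \<le> G t"
  then have "eventually (\<lambda>s. G s < 0) (nhds t)"
    using assms(1) by (intro order_tendstoD(2)) (auto simp: isCont_def tendsto_at_iff_tendsto_nhds)
  with assms(2) have "eventually (\<lambda>s. P s \<and> G s < 0) (nhds t)"
    by (rule eventually_conj)
  then obtain S where S: "open S" "t \<in> S" "\<And>s. s \<in> S \<Longrightarrow> P s \<and> G s < 0"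
    unfolding eventually_nhds by blast
  have "AE s in lebesgue. s \<in> S \<longrightarrow> s \<in> {}"
    using AE_completion[OF assms(3)] by eventually_elim (use S(3) in fastforce)
  then have "t \<in> {}"
    by (rule mem_closed_if_AE_lebesgue_open[OF S(1) closed_empty _ S(2)])
  then show False
    by simp
qed

lemma compact_band:
  fixes a b :: "'a::t2_space \<Rightarrow> real"
  assumes "compact T" "continuous_on T a" "continuous_on T b"
  shows "compact {t \<in> T. a t \<le> r \<and> r \<le> b t}"
proof -
  have "closed (T \<inter> a -` {..r})"
    using compact_imp_closed[OF assms(1)] by (intro continuous_closed_preimage[OF assms(2)]) auto
  then have "closed (T \<inter> a -` {..r} \<inter> b -` {r..})"
    by (rule continuous_closed_preimage[OF continuous_on_subset[OF assms(3) Int_lower1]]) auto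
  moreover have "{t \<in> T. a t \<le> r \<and> r \<le> b t} = T \<inter> (T \<inter> a -` {..r} \<inter> b -` {r..})"
    by auto
  ultimately show ?thesis
    using assms(1) by (simp add: compact_Int_closed)
qed

lemma finite_ints_between:
  fixes a b :: "'a \<Rightarrow> real"
  assumes "bdd_below (a ` T)" "bdd_above (b ` T)"
  shows "finite {j::int. \<exists>t\<in>T. a t \<le> of_int j \<and> of_int j \<le> b t}"
proof -
  obtain lo hi where lo: "\<And>t. t \<in> T \<Longrightarrow> lo \<le> a t" and hi: "\<And>t. t \<in> T \<Longrightarrow> b t \<le> hi"
    using assms by (meson bdd_above.E bdd_below.E imageI)
  have "j \<in> {\<lfloor>lo\<rfloor>..\<lceil>hi\<rceil>}" if "t \<in> T" "a t \<le> of_int j" "of_int j \<le> b t" for j t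
    using lo[OF that(1)] hi[OF that(1)] that(2,3) by (simp add: floor_le_iff le_ceiling_iff)
  then have "{j::int. \<exists>t\<in>T. a t \<le> of_int j \<and> of_int j \<le> b t} \<subseteq> {\<lfloor>lo\<rfloor>..\<lceil>hi\<rceil>}"
    by blast
  then show ?thesis
    using finite_subset by blast
qed

lemma finite_family_attains_min:
  fixes f :: "'i \<Rightarrow> 'a::topological_space \<Rightarrow> real"
  assumes "finite I" "\<And>i. i \<in> I \<Longrightarrow> compact (K i)" "\<And>i. i \<in> I \<Longrightarrow> continuous_on (K i) (f i)"
    and "i0 \<in> I" "p0 \<in> K i0"
  shows "\<exists>i\<in>I. \<exists>p\<in>K i. \<forall>j\<in>I. \<forall>q\<in>K j. f i p \<le> f j q"
proof -
  let ?S = "\<Union>i\<in>I. f i ` K i"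
  have "compact ?S"
    using assms(1) by (rule compact_UN) (use assms(2,3) compact_continuous_image in blast)
  moreover have "?S \<noteq> {}"
    using assms(4,5) by blast
  ultimately obtain m where m: "m \<in> ?S" "\<forall>y\<in>?S. m \<le> y"
    by (meson compact_attains_inf)
  then obtain i p where "i \<in> I" "p \<in> K i" "m = f i p"
    by blast
  moreover have "\<forall>j\<in>I. \<forall>q\<in>K j. m \<le> f j q"
    using m(2) by blast
  ultimately show ?thesis
    by blast
qed

locale coupled_supersolution =
  fixes \<alpha> \<beta> d M :: real
    and c :: "int \<Rightarrow> real \<Rightarrow> real"
    and \<zeta> \<xi> :: "real \<Rightarrow> real"
    and \<rho> \<rho>' :: "int \<Rightarrow> real \<Rightarrow> real"
    and v vt vx vxx :: "int \<Rightarrow> real \<Rightarrow> real \<Rightarrow> real"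
  assumes pos: "\<alpha> > 0" "\<beta> > 0" "d > 0"
    and c_bound: "\<And>j. AE t in lborel. t > 0 \<longrightarrow> c j t \<le> M"
    and \<zeta>_cont: "continuous_on {0..} \<zeta>"
    and \<xi>_cont: "continuous_on {0..} \<xi>"
    and \<rho>_deriv: "\<And>j t. t \<ge> 0 \<Longrightarrow> (\<rho> j has_real_derivative \<rho>' j t) (at t within {0..})"
    and \<rho>'_cont: "\<And>j. continuous_on {0..} (\<rho>' j)"
    and v_cont: "\<And>j. continuous_on ({0..} \<times> {0..1}) (\<lambda>(t, x). v j t x)"
    and vt_deriv: "\<And>j t x. t > 0 \<Longrightarrow> 0 < x \<Longrightarrow> x < 1 \<Longrightarrow>
                   ((\<lambda>s. v j s x) has_real_derivative vt j t x) (at t)"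
    and vx_deriv: "\<And>j t x. t > 0 \<Longrightarrow> x \<in> {0..1} \<Longrightarrow>
                   ((\<lambda>y. v j t y) has_real_derivative vx j t x) (at x within {0..1})"
    and vxx_deriv: "\<And>j t x. t > 0 \<Longrightarrow> 0 < x \<Longrightarrow> x < 1 \<Longrightarrow>
                   ((\<lambda>y. vx j t y) has_real_derivative vxx j t x) (at x)"
    and heat_ineq: "\<And>j t x. t > 0 \<Longrightarrow> \<zeta> t \<le> of_int j \<Longrightarrow> of_int j \<le> \<xi> t \<Longrightarrow>
                   0 < x \<Longrightarrow> x < 1 \<Longrightarrow> vt j t x - d * vxx j t x \<ge> 0"
    and \<rho>_ineq: "\<And>j t. t > 0 \<Longrightarrow> \<zeta> t \<le> of_int j \<Longrightarrow> of_int j \<le> \<xi> t \<Longrightarrow>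
                   \<rho>' j t - c j t * \<rho> j t \<ge> \<alpha> * (v j t 0 + v (j - 1) t 1)"
    and flux_left: "\<And>j t. t > 0 \<Longrightarrow> \<zeta> t \<le> of_int j \<Longrightarrow> of_int j \<le> \<xi> t \<Longrightarrow>
                   - d * vx j t 0 + \<alpha> * v j t 0 \<ge> \<beta> * \<rho> j t"
    and flux_right: "\<And>j t. t > 0 \<Longrightarrow> \<zeta> t \<le> of_int j \<Longrightarrow> of_int j \<le> \<xi> t \<Longrightarrow>
                   d * vx j t 1 + \<alpha> * v j t 1 \<ge> \<beta> * \<rho> (j + 1) t"
    and init_nonneg: "\<And>j x. x \<in> {0..1} \<Longrightarrow> \<zeta> 0 - 1 \<le> of_int j \<Longrightarrow> of_int j \<le> \<xi> 0 + 1 \<Longrightarrow>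
                   v j 0 x \<ge> 0 \<and> \<rho> j 0 \<ge> 0"
    and side_nonneg: "\<And>j t x. t > 0 \<Longrightarrow> x \<in> {0..1} \<Longrightarrow>
                   (\<zeta> t - 1 \<le> of_int j \<and> of_int j < \<zeta> t) \<or> (\<xi> t < of_int j \<and> of_int j \<le> \<xi> t + 1) \<Longrightarrow>
                   v j t x \<ge> 0 \<and> \<rho> j t \<ge> 0"
begin

(* Any \<kappa> > \<beta>/\<alpha> makes the boundary inequalities incompatible with a negative minimum of v,
   and any positive \<gamma> > M + 2\<alpha>\<kappa> does the same for the heat inequality and the differential
   inequality of \<rho>. *)
definition \<kappa> :: real where "\<kappa> = 2 * \<beta> / \<alpha>"

definition \<gamma> :: real where "\<gamma> = \<bar>M\<bar> + 2 * \<alpha> * \<kappa> + 1"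

definition scaled_min :: "int \<Rightarrow> real \<Rightarrow> real \<Rightarrow> real" where
  "scaled_min j t x = exp (- \<gamma> * t) * min (v j t x) (\<kappa> * \<rho> j t)"

definition region :: "real \<Rightarrow> int \<Rightarrow> (real \<times> real) set" where
  "region T j = {t \<in> {0..T}. \<zeta> t - 1 \<le> of_int j \<and> of_int j \<le> \<xi> t + 1} \<times> {0..1}"

lemma \<kappa>_pos: "\<kappa> > 0"
  using pos by (simp add: \<kappa>_def)

lemma \<gamma>_pos: "\<gamma> > 0"
proof -
  have "0 < 2 * \<alpha> * \<kappa>"
    using \<kappa>_pos pos(1) by simp
  then show ?thesis
    unfolding \<gamma>_def by (simp add: add_nonneg_pos add_pos_pos)
qed

lemma \<gamma>_large: "M + 2 * \<alpha> * \<kappa> < \<gamma>"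
  by (simp add: \<gamma>_def)

lemma \<rho>_continuous: "continuous_on {0..} (\<rho> j)"
  using \<rho>_deriv by (meson DERIV_continuous atLeast_iff continuous_on_eq_continuous_within)

lemma v_continuous_in_time:
  assumes "x \<in> {0..1}"
  shows "continuous_on {0..} (\<lambda>s. v j s x)"
proof -
  have "continuous_on {0..} ((\<lambda>(t, x). v j t x) \<circ> (\<lambda>s. (s, x)))"
    using assms by (intro continuous_on_compose continuous_intros continuous_on_subset[OF v_cont]) auto
  then show ?thesis
    by (simp add: o_def)
qed

(* c is only essentially bounded, so c \<le> M is not available at t itself: it holds almost
   everywhere near t, and the resulting inequality passes to t by continuity. *)
lemma \<rho>'_lower_bound:
  assumes t: "0 < t" "\<zeta> t \<le> of_int j" "of_int j \<le> \<xi> t" and neg: "\<rho> j t < 0"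
  shows "M * \<rho> j t + \<alpha> * (v j t 0 + v (j - 1) t 1) \<le> \<rho>' j t"
proof -
  define G where "G s = \<rho>' j s - M * \<rho> j s - \<alpha> * (v j s 0 + v (j - 1) s 1)" for s
  define P where "P s \<longleftrightarrow> 0 < s \<and> \<rho> j s < 0 \<and> \<zeta> s < of_int j + 1 \<and> of_int j - 1 < \<xi> s" for s
  have cont: "isCont f t" if "continuous_on {0..} f" for f
    using continuous_on_interior[OF that] t(1) by simp
  have lim: "(f \<longlongrightarrow> f t) (nhds t)" if "continuous_on {0..} f" for f
    using cont[OF that] by (simp add: isCont_def tendsto_at_iff_tendsto_nhds)
  have "isCont G t"
    unfolding G_def by (intro continuous_intros cont \<rho>'_cont \<rho>_continuous v_continuous_in_time) auto
  moreover have "eventually P (nhds t)"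
    unfolding P_def using t neg
    by (intro eventually_conj order_tendstoD[OF filterlim_ident] order_tendstoD[OF lim]
          \<rho>_continuous \<zeta>_cont \<xi>_cont) auto
  moreover have "AE s in lborel. P s \<longrightarrow> 0 \<le> G s"
    using c_bound[of j]
  proof eventually_elim
    case (elim s)
    show ?case
    proof
      assume "P s"
      then have "\<zeta> s \<le> of_int j \<and> of_int j \<le> \<xi> s"
        using side_nonneg[of s 0 j] by (force simp: P_def)
      then have "\<alpha> * (v j s 0 + v (j - 1) s 1) \<le> \<rho>' j s - c j s * \<rho> j s"
        using \<rho>_ineq \<open>P s\<close> by (simp add: P_def)
      moreover have "0 \<le> (c j s - M) * \<rho> j s"
        using elim \<open>P s\<close> by (intro mult_nonpos_nonpos) (auto simp: P_def)
      ultimately show "0 \<le> G s"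
        by (simp add: G_def algebra_simps)
    qed
  qed
  ultimately have "0 \<le> G t"
    by (rule nonneg_if_AE_nonneg_nhds)
  then show ?thesis
    by (simp add: G_def)
qed

lemma region_compact: "compact (region T j)"
proof -
  have "continuous_on {0..T} \<zeta>" "continuous_on {0..T} \<xi>"
    by (auto intro: continuous_on_subset[OF \<zeta>_cont] continuous_on_subset[OF \<xi>_cont])
  then show ?thesis
    unfolding region_def by (intro compact_Times compact_band compact_Icc continuous_intros)
qed

lemma finite_nonempty_regions: "finite {j. region T j \<noteq> {}}"
proof -
  have "continuous_on {0..T} (\<lambda>t. \<zeta> t - 1)" "continuous_on {0..T} (\<lambda>t. \<xi> t + 1)"
    by (auto intro!: continuous_intros intro: continuous_on_subset[OF \<zeta>_cont] continuous_on_subset[OF \<xi>_cont])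
  then have "bdd_below ((\<lambda>t. \<zeta> t - 1) ` {0..T})" "bdd_above ((\<lambda>t. \<xi> t + 1) ` {0..T})"
    by (auto intro!: bounded_imp_bdd_below bounded_imp_bdd_above compact_imp_bounded
        compact_continuous_image)
  then have "finite {j::int. \<exists>t\<in>{0..T}. \<zeta> t - 1 \<le> of_int j \<and> of_int j \<le> \<xi> t + 1}"
    by (rule finite_ints_between)
  then show ?thesis
    by (rule finite_subset[rotated]) (auto simp: region_def)
qed

lemma scaled_min_continuous_on_region: "continuous_on (region T j) (\<lambda>(t, x). scaled_min j t x)"
proof -
  let ?v = "\<lambda>(t, x). v j t x"
  have sub: "region T j \<subseteq> {0..} \<times> {0..1}"
    by (auto simp: region_def)
  have "continuous_on (region T j) ?v"
    using v_cont sub by (rule continuous_on_subset)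
  moreover have "continuous_on (region T j) (\<lambda>p. \<rho> j (fst p))"
    by (rule continuous_on_compose2[OF \<rho>_continuous continuous_on_fst]) (use sub in auto)
  ultimately have "continuous_on (region T j) (\<lambda>p. exp (- \<gamma> * fst p) * min (?v p) (\<kappa> * \<rho> j (fst p)))"
    by (intro continuous_on_mult continuous_on_min continuous_on_exp continuous_on_mult_left
        continuous_on_minus continuous_on_fst continuous_on_const continuous_on_id)
  then show ?thesis
    by (simp add: scaled_min_def case_prod_beta)
qed

lemma scaled_min_attains_min:
  assumes "(t, x) \<in> region T j"
  obtains js ts xs where "(ts, xs) \<in> region T js"
    and "\<And>i s y. (s, y) \<in> region T i \<Longrightarrow> scaled_min js ts xs \<le> scaled_min i s y"
proof -
  have "\<exists>i\<in>{j. region T j \<noteq> {}}. \<exists>p\<in>region T i. \<forall>i'\<in>{j. region T j \<noteq> {}}. \<forall>q\<in>region T i'.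
          (\<lambda>(s, y). scaled_min i s y) p \<le> (\<lambda>(s, y). scaled_min i' s y) q"
    using assms
    by (intro finite_family_attains_min finite_nonempty_regions region_compact
        scaled_min_continuous_on_region) auto
  then show ?thesis
    using that by fast
qed

lemma left_neighbourhood_in_region:
  assumes t: "0 < t" "t \<le> T" "\<zeta> t \<le> of_int j" "of_int j \<le> \<xi> t"
  obtains a where "a < t" "\<And>s x. s \<in> {a..t} \<Longrightarrow> x \<in> {0..1} \<Longrightarrow> (s, x) \<in> region T j"
proof -
  have "(\<zeta> \<longlongrightarrow> \<zeta> t) (at t)" "(\<xi> \<longlongrightarrow> \<xi> t) (at t)"
    using continuous_on_interior[OF \<zeta>_cont] continuous_on_interior[OF \<xi>_cont] t(1)
    by (simp_all add: isCont_def)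
  then have "eventually (\<lambda>s. 0 < s \<and> \<zeta> s < of_int j + 1 \<and> of_int j - 1 < \<xi> s) (at t)"
    using t by (intro eventually_conj order_tendstoD tendsto_ident_at) auto
  then obtain b where "b < t" and b: "\<And>s. b < s \<Longrightarrow> s < t \<Longrightarrow> 0 < s \<and> \<zeta> s < of_int j + 1 \<and> of_int j - 1 < \<xi> s"
    unfolding eventually_at_split eventually_at_left_field by blast
  show ?thesis
  proof
    show "(b + t) / 2 < t"
      using \<open>b < t\<close> by simp
    show "(s, x) \<in> region T j" if s: "s \<in> {(b + t) / 2..t}" and x: "x \<in> {0..1}" for s x
    proof (cases "s = t")
      case True
      then show ?thesis
        using t x by (simp add: region_def)
    next
      case False
      then have "b < s" "s < t"
        using s \<open>b < t\<close> by auto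
      then show ?thesis
        using b[of s] t(2) x by (simp add: region_def)
    qed
  qed
qed

lemma negative_v_min_impossible:
  assumes t: "0 < t" "\<zeta> t \<le> of_int j" "of_int j \<le> \<xi> t" and x: "x \<in> {0..1}" and "a < t"
    and neg: "v j t x < 0"
    and space_min: "\<And>y. y \<in> {0..1} \<Longrightarrow> v j t x \<le> v j t y"
    and below_\<rho>: "v j t x \<le> \<kappa> * \<rho> j t" "v j t x \<le> \<kappa> * \<rho> (j + 1) t"
    and time_min: "\<And>s. s \<in> {a..<t} \<Longrightarrow> exp (- \<gamma> * t) * v j t x \<le> exp (- \<gamma> * s) * v j s x"
  shows False
proof -
  have boundary_gap: "\<alpha> * v j t x < \<beta> * \<rho> i t" if "v j t x \<le> \<kappa> * \<rho> i t" for i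
  proof -
    have "\<alpha> * v j t x < \<alpha> / 2 * v j t x"
      using pos(1) neg by (simp add: mult_pos_neg)
    also have "\<dots> \<le> \<alpha> / 2 * (\<kappa> * \<rho> i t)"
      using that pos(1) by (intro mult_left_mono) auto
    also have "\<dots> = \<beta> * \<rho> i t"
      using pos(1) by (simp add: \<kappa>_def)
    finally show ?thesis .
  qed
  consider "x = 0" | "x = 1" | "0 < x" "x < 1"
    using x by fastforce
  then show False
  proof cases
    case 1
    have "0 \<le> vx j t 0"
      by (rule deriv_nonneg_at_right_min[OF vx_deriv[OF t(1)]]) (use space_min 1 in auto)
    then have "0 \<le> d * vx j t 0"
      using pos(3) by simp
    then show False
      using flux_left[OF t] boundary_gap[OF below_\<rho>(1), unfolded 1] by linarith
  next
    case 2
    have "vx j t 1 \<le> 0"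
      by (rule deriv_nonpos_at_left_min[OF vx_deriv[OF t(1)]]) (use space_min 2 in auto)
    then have "d * vx j t 1 \<le> 0"
      using pos(3) by (simp add: mult_nonneg_nonpos)
    then show False
      using flux_right[OF t] boundary_gap[OF below_\<rho>(2), unfolded 2] by linarith
  next
    case 3
    have "0 \<le> vxx j t x"
    proof (rule second_deriv_nonneg_at_min)
      show "x \<in> {0<..<1}"
        using 3 by simp
      show "(v j t has_real_derivative vx j t y) (at y)" if "y \<in> {0<..<1}" for y
        using vx_deriv[OF t(1), of y] that by (simp add: at_within_Icc_at)
      show "(vx j t has_real_derivative vxx j t x) (at x)"
        using vxx_deriv[OF t(1) 3] .
      show "v j t x \<le> v j t y" if "y \<in> {0<..<1}" for y
        using space_min that by simp
    qed
    then have "0 \<le> d * vxx j t x"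
      using pos(3) by simp
    moreover have "vt j t x \<le> \<gamma> * v j t x"
      using vt_deriv[OF t(1) 3] \<open>a < t\<close> time_min by (rule weighted_deriv_le_at_left_min)
    moreover have "\<gamma> * v j t x < 0"
      using \<gamma>_pos neg by (simp add: mult_pos_neg)
    ultimately show False
      using heat_ineq[OF t 3] by linarith
  qed
qed

lemma negative_\<rho>_min_impossible:
  assumes t: "0 < t" "\<zeta> t \<le> of_int j" "of_int j \<le> \<xi> t" and "a < t"
    and neg: "\<rho> j t < 0"
    and below_v: "\<kappa> * \<rho> j t \<le> v j t 0" "\<kappa> * \<rho> j t \<le> v (j - 1) t 1"
    and time_min: "\<And>s. s \<in> {a..<t} \<Longrightarrow> exp (- \<gamma> * t) * \<rho> j t \<le> exp (- \<gamma> * s) * \<rho> j s"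
  shows False
proof -
  have "at t within {0..} = at t"
    using t(1) by (intro at_within_interior) simp
  then have "(\<rho> j has_real_derivative \<rho>' j t) (at t)"
    using \<rho>_deriv[of t j] t(1) by simp
  then have "\<rho>' j t \<le> \<gamma> * \<rho> j t"
    using \<open>a < t\<close> time_min by (rule weighted_deriv_le_at_left_min)
  moreover have "\<alpha> * (2 * \<kappa> * \<rho> j t) \<le> \<alpha> * (v j t 0 + v (j - 1) t 1)"
    using below_v pos(1) by (intro mult_left_mono) auto
  ultimately have "M * \<rho> j t + \<alpha> * (2 * \<kappa> * \<rho> j t) \<le> \<gamma> * \<rho> j t"
    using \<rho>'_lower_bound[OF t neg] by linarith
  then have "0 \<le> (\<gamma> - M - 2 * \<alpha> * \<kappa>) * \<rho> j t"
    by (simp add: algebra_simps)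
  moreover have "(\<gamma> - M - 2 * \<alpha> * \<kappa>) * \<rho> j t < 0"
    using \<gamma>_large neg by (intro mult_pos_neg) auto
  ultimately show False
    by simp
qed

lemma negative_min_location:
  assumes "(t, x) \<in> region T j" and neg: "min (v j t x) (\<kappa> * \<rho> j t) < 0"
  shows "0 < t" "\<zeta> t \<le> of_int j" "of_int j \<le> \<xi> t"
proof -
  have tx: "0 \<le> t" "x \<in> {0..1}" "\<zeta> t - 1 \<le> of_int j" "of_int j \<le> \<xi> t + 1"
    using assms(1) by (auto simp: region_def)
  have not_nonneg: "\<not> (0 \<le> v j t x \<and> 0 \<le> \<rho> j t)"
    using neg \<kappa>_pos by (auto simp: min_less_iff_disj mult_less_0_iff)
  show "0 < t"
  proof (rule ccontr)
    assume "\<not> 0 < t"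
    then have "t = 0"
      using tx(1) by simp
    then show False
      using init_nonneg[OF tx(2), of j] tx(3,4) not_nonneg by simp
  qed
  show "\<zeta> t \<le> of_int j" "of_int j \<le> \<xi> t"
    using side_nonneg[OF \<open>0 < t\<close> tx(2), of j] tx(3,4) not_nonneg by linarith+
qed

lemma minimum_same_time_bound:
  assumes "(ts, xs) \<in> region T js"
    and min: "\<And>i s y. (s, y) \<in> region T i \<Longrightarrow> scaled_min js ts xs \<le> scaled_min i s y"
    and inside: "\<zeta> ts \<le> of_int js" "of_int js \<le> \<xi> ts"
    and "y \<in> {0..1}" "i \<in> {js - 1, js, js + 1}"
  shows "min (v js ts xs) (\<kappa> * \<rho> js ts) \<le> min (v i ts y) (\<kappa> * \<rho> i ts)"
proof -
  have "(ts, y) \<in> region T i"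
    using assms by (auto simp: region_def)
  from min[OF this] show ?thesis
    by (simp add: scaled_min_def)
qed

lemma minimum_over_earlier_times:
  assumes "(ts, xs) \<in> region T js"
    and min: "\<And>i s y. (s, y) \<in> region T i \<Longrightarrow> scaled_min js ts xs \<le> scaled_min i s y"
    and inside: "0 < ts" "\<zeta> ts \<le> of_int js" "of_int js \<le> \<xi> ts"
  obtains a where "a < ts"
    and "\<And>s y. s \<in> {a..<ts} \<Longrightarrow> y \<in> {0..1} \<Longrightarrow>
           exp (- \<gamma> * ts) * min (v js ts xs) (\<kappa> * \<rho> js ts) \<le> exp (- \<gamma> * s) * min (v js s y) (\<kappa> * \<rho> js s)"
proof -
  have "ts \<le> T"
    using assms(1) by (simp add: region_def)
  then obtain a where "a < ts" and left: "\<And>s y. s \<in> {a..ts} \<Longrightarrow> y \<in> {0..1} \<Longrightarrow> (s, y) \<in> region T js"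
    using left_neighbourhood_in_region[OF inside(1) _ inside(2,3)] by blast
  show ?thesis
  proof (rule that[OF \<open>a < ts\<close>])
    show "exp (- \<gamma> * ts) * min (v js ts xs) (\<kappa> * \<rho> js ts) \<le> exp (- \<gamma> * s) * min (v js s y) (\<kappa> * \<rho> js s)"
      if "s \<in> {a..<ts}" "y \<in> {0..1}" for s y
      using min[OF left[of s y]] that by (simp add: scaled_min_def)
  qed
qed

lemma scaled_min_minimum_nonneg:
  assumes "(ts, xs) \<in> region T js"
    and min: "\<And>i s y. (s, y) \<in> region T i \<Longrightarrow> scaled_min js ts xs \<le> scaled_min i s y"
  shows "0 \<le> scaled_min js ts xs"
proof (rule ccontr)
  define m0 where "m0 = min (v js ts xs) (\<kappa> * \<rho> js ts)"
  assume "\<not> ?thesis"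
  then have neg: "m0 < 0"
    unfolding scaled_min_def m0_def by (metis exp_ge_zero mult_nonneg_nonneg not_le)
  have xs: "xs \<in> {0..1}"
    using assms(1) by (simp add: region_def)
  note inside = negative_min_location[OF assms(1) neg[unfolded m0_def]]
  note same_time = minimum_same_time_bound[OF assms inside(2,3), folded m0_def]
  obtain a where "a < ts" and earlier: "\<And>s y. s \<in> {a..<ts} \<Longrightarrow> y \<in> {0..1} \<Longrightarrow>
      exp (- \<gamma> * ts) * m0 \<le> exp (- \<gamma> * s) * min (v js s y) (\<kappa> * \<rho> js s)"
    using minimum_over_earlier_times[OF assms inside] unfolding m0_def by blast
  show False
  proof (cases "v js ts xs \<le> \<kappa> * \<rho> js ts")
    case True
    then have m0: "m0 = v js ts xs"
      by (simp add: m0_def)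
    show False
    proof (rule negative_v_min_impossible[OF inside xs \<open>a < ts\<close>])
      show "exp (- \<gamma> * ts) * v js ts xs \<le> exp (- \<gamma> * s) * v js s xs" if "s \<in> {a..<ts}" for s
      proof -
        have "exp (- \<gamma> * ts) * v js ts xs \<le> exp (- \<gamma> * s) * min (v js s xs) (\<kappa> * \<rho> js s)"
          using earlier[OF that xs] m0 by simp
        also have "\<dots> \<le> exp (- \<gamma> * s) * v js s xs"
          by (simp add: mult_left_mono)
        finally show ?thesis .
      qed
    qed (use m0 neg True same_time[of _ js] same_time[of 0 "js + 1"] in auto)
  next
    case False
    then have m0: "m0 = \<kappa> * \<rho> js ts"
      by (simp add: m0_def)
    show False
    proof (rule negative_\<rho>_min_impossible[OF inside \<open>a < ts\<close>])
      show "exp (- \<gamma> * ts) * \<rho> js ts \<le> exp (- \<gamma> * s) * \<rho> js s" if "s \<in> {a..<ts}" for s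
      proof -
        have "\<kappa> * (exp (- \<gamma> * ts) * \<rho> js ts) = exp (- \<gamma> * ts) * m0"
          using m0 by simp
        also have "\<dots> \<le> exp (- \<gamma> * s) * min (v js s 0) (\<kappa> * \<rho> js s)"
          using earlier[OF that, of 0] by simp
        also have "\<dots> \<le> \<kappa> * (exp (- \<gamma> * s) * \<rho> js s)"
          by (simp add: mult.left_commute[of \<kappa>] mult_left_mono)
        finally show ?thesis
          using \<kappa>_pos by (rule mult_le_cancel_left_pos[THEN iffD1, rotated])
      qed
    qed (use m0 neg \<kappa>_pos same_time[of 0 js] same_time[of 1 "js - 1"] in \<open>auto simp: mult_less_0_iff\<close>)
  qed
qed

theorem supersolution_nonneg:
  assumes "0 < t" "x \<in> {0..1}" "\<zeta> t \<le> of_int j" "of_int j \<le> \<xi> t"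
  shows "0 \<le> v j t x \<and> 0 \<le> \<rho> j t"
proof -
  have tx: "(t, x) \<in> region t j"
    using assms by (auto simp: region_def)
  obtain js ts xs where "(ts, xs) \<in> region t js"
    and min: "\<And>i s y. (s, y) \<in> region t i \<Longrightarrow> scaled_min js ts xs \<le> scaled_min i s y"
    by (rule scaled_min_attains_min[OF tx]) blast
  then have "0 \<le> scaled_min js ts xs"
    by (rule scaled_min_minimum_nonneg)
  then have "0 \<le> scaled_min j t x"
    using min[OF tx] by linarith
  then have "0 \<le> min (v j t x) (\<kappa> * \<rho> j t)"
    by (simp add: scaled_min_def zero_le_mult_iff)
  then show ?thesis
    using \<kappa>_pos by (simp add: zero_le_mult_iff)
qed

end

theorem propositionB2:
  fixes \<alpha> \<beta> d :: real
    and c :: "int \<Rightarrow> real \<Rightarrow> real"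
    and \<zeta> \<xi> :: "real \<Rightarrow> real"
    and \<rho> \<rho>' :: "int \<Rightarrow> real \<Rightarrow> real"
    and v vt vx vxx :: "int \<Rightarrow> real \<Rightarrow> real \<Rightarrow> real"
  assumes pos: "\<alpha> > 0" "\<beta> > 0" "d > 0"
    and c_meas: "\<And>j. c j \<in> borel_measurable lborel"
    and c_bdd: "\<exists>M. \<forall>j. AE t in lborel. t > 0 \<longrightarrow> \<bar>c j t\<bar> \<le> M"
    and \<zeta>_cont: "continuous_on {0..} \<zeta>"
    and \<xi>_cont: "continuous_on {0..} \<xi>"
    and \<rho>_deriv: "\<And>j t. t \<ge> 0 \<Longrightarrow> (\<rho> j has_real_derivative \<rho>' j t) (at t within {0..})"
    and \<rho>'_cont: "\<And>j. continuous_on {0..} (\<rho>' j)"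
    and v_cont: "\<And>j. continuous_on ({0..} \<times> {0..1}) (\<lambda>(t, x). v j t x)"
    and vt_deriv: "\<And>j t x. t > 0 \<Longrightarrow> 0 < x \<Longrightarrow> x < 1 \<Longrightarrow>
                   ((\<lambda>s. v j s x) has_real_derivative vt j t x) (at t)"
    and vt_cont: "\<And>j. continuous_on ({0<..} \<times> {0<..<1}) (\<lambda>(t, x). vt j t x)"
    and vx_deriv: "\<And>j t x. t > 0 \<Longrightarrow> x \<in> {0..1} \<Longrightarrow>
                   ((\<lambda>y. v j t y) has_real_derivative vx j t x) (at x within {0..1})"
    and vx_cont: "\<And>j. continuous_on ({0<..} \<times> {0..1}) (\<lambda>(t, x). vx j t x)"
    and vxx_deriv: "\<And>j t x. t > 0 \<Longrightarrow> 0 < x \<Longrightarrow> x < 1 \<Longrightarrow>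
                   ((\<lambda>y. vx j t y) has_real_derivative vxx j t x) (at x)"
    and vxx_cont: "\<And>j. continuous_on ({0<..} \<times> {0<..<1}) (\<lambda>(t, x). vxx j t x)"
    and eq_v: "\<And>j t x. t > 0 \<Longrightarrow> \<zeta> t \<le> of_int j \<Longrightarrow> of_int j \<le> \<xi> t \<Longrightarrow>
                   0 < x \<Longrightarrow> x < 1 \<Longrightarrow> vt j t x - d * vxx j t x \<ge> 0"
    and eq_\<rho>: "\<And>j t. t > 0 \<Longrightarrow> \<zeta> t \<le> of_int j \<Longrightarrow> of_int j \<le> \<xi> t \<Longrightarrow>
                   \<rho>' j t - c j t * \<rho> j t \<ge> \<alpha> * (v j t 0 + v (j - 1) t 1)"
    and bc0: "\<And>j t. t > 0 \<Longrightarrow> \<zeta> t \<le> of_int j \<Longrightarrow> of_int j \<le> \<xi> t \<Longrightarrow>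
                   - d * vx j t 0 + \<alpha> * v j t 0 \<ge> \<beta> * \<rho> j t"
    and bc1: "\<And>j t. t > 0 \<Longrightarrow> \<zeta> t \<le> of_int j \<Longrightarrow> of_int j \<le> \<xi> t \<Longrightarrow>
                   d * vx j t 1 + \<alpha> * v j t 1 \<ge> \<beta> * \<rho> (j + 1) t"
    and init: "\<And>j x. x \<in> {0..1} \<Longrightarrow> \<zeta> 0 - 1 \<le> of_int j \<Longrightarrow> of_int j \<le> \<xi> 0 + 1 \<Longrightarrow>
                   v j 0 x \<ge> 0 \<and> \<rho> j 0 \<ge> 0"
    and side: "\<And>j t x. t > 0 \<Longrightarrow> x \<in> {0..1} \<Longrightarrow>
                   (\<zeta> t - 1 \<le> of_int j \<and> of_int j < \<zeta> t) \<or> (\<xi> t < of_int j \<and> of_int j \<le> \<xi> t + 1) \<Longrightarrow>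
                   v j t x \<ge> 0 \<and> \<rho> j t \<ge> 0"
  shows "\<forall>t>0. \<forall>x\<in>{0..1}. \<forall>j::int. \<zeta> t \<le> of_int j \<and> of_int j \<le> \<xi> t \<longrightarrow>
           v j t x \<ge> 0 \<and> \<rho> j t \<ge> 0"
proof -
  obtain M where M: "\<And>j. AE t in lborel. t > 0 \<longrightarrow> \<bar>c j t\<bar> \<le> M"
    using c_bdd by blast
  interpret coupled_supersolution \<alpha> \<beta> d M c \<zeta> \<xi> \<rho> \<rho>' v vt vx vxx
  proof unfold_locales
    show "AE t in lborel. t > 0 \<longrightarrow> c j t \<le> M" for j
      using M[of j] by eventually_elim auto
  qed (fact assms)+
  show ?thesis
    using supersolution_nonneg by blast
qed

end
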